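(* Assume $\lfloor (M_1+\dots+M_n)/p\rfloor=n-1$ (ample reduction), and let $c(z)=(c^l_j(z))_{l,j=1,\dots,n-1}$ be defined by $I^{[l]}(z)=\sum_{j=1}^{n-1}c^l_j(z)w_j$, where $w_j=M_j^{-1}e_j-M_{j+1}^{-1}e_{j+1}$. Then for any $i\ne j$ the polynomial $\det c(z)$ is divisible by $(z_i-z_j)^{M_i+M_j-p}$.
   Context: $p,q$ are primes, $n$ a positive integer with $p>n\ge2$, $p>q$; $m_1,\dots,m_n$ are positive integers $<q$; $M_i$ is the least positive integer with $M_i\equiv -m_iq^{-1}\pmod p$ (its residue in formulas over $\mathbb{F}_p$). $e_1,\dots,e_n$ is the standard basis of $\mathbb{F}_p^n$. With $\Phi_p(x,z)=\prod_i(x-z_i)^{M_i}$, $I^{[l]}(z)\in\mathbb{F}_p[z_1,\dots,z_n]^n$ is the coefficient of $x^{lp-1}$ in $(\Phi_p/(x-z_1),\dots,\Phi_p/(x-z_n))$; its coefficient vectors lie in $\{c:\sum_im_ic_i=0\}$, of which $w_1,\dots,w_{n-1}$ is a basis. (Under the hypothesis, $M_i+M_j-p>0$.) *)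

theory Defs
  imports "HOL-Library.Poly_Mapping" "HOL-Computational_Algebra.Polynomial"
    "HOL-Number_Theory.Cong"
    "Berlekamp_Zassenhaus.Finite_Field" "Jordan_Normal_Form.Determinant"
begin

(* Multivariate polynomials over the field F_p = 'p mod_ring (CARD('p) = p),
  in variables z_i (i :: nat): a monomial is an exponent vector nat =>0 nat. *)
type_synonym 'a mpoly = "(nat \<Rightarrow>\<^sub>0 nat) \<Rightarrow>\<^sub>0 'a"

definition mvar :: "nat \<Rightarrow> 'a::{zero,one} mpoly" where
  "mvar i = Poly_Mapping.single (Poly_Mapping.single i 1) 1"

definition mconst :: "'a::zero \<Rightarrow> 'a mpoly" where
  "mconst a = Poly_Mapping.single 0 a"

(* M_i: least positive integer with M_i = - m_i q^{-1} (mod p),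
  equivalently M_i q + m_i = 0 (mod p). *)
definition Mexp :: "nat \<Rightarrow> nat \<Rightarrow> nat \<Rightarrow> nat" where
  "Mexp p q mi = (LEAST M. 0 < M \<and> [M * q + mi = 0] (mod p))"

(* The l-th vector I^{[l]}(z), j-th component: coefficient of x^{lp-1} in
  Phi_p(x,z)/(x - z_j) = prod_i (x - z_i)^(M_i - delta_ij). *)
definition Ivec :: "nat \<Rightarrow> (nat \<Rightarrow> nat) \<Rightarrow> nat \<Rightarrow> nat \<Rightarrow> nat \<Rightarrow> 'a::comm_ring_1 mpoly" where
  "Ivec n M p l j = coeff (\<Prod>i\<in>{1..n}. [:- mvar i, 1:] ^ (M i - (if i = j then 1 else 0))) (l * p - 1)"

definition wvec :: "(nat \<Rightarrow> nat) \<Rightarrow> nat \<Rightarrow> nat \<Rightarrow> 'a::field" where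
  "wvec M j k = (if k = j then inverse (of_nat (M j))
                 else if k = j + 1 then - inverse (of_nat (M (j + 1))) else 0)"

end

theory Submission
  imports Defs
begin

(* Put Phi_k = Phi_p/(x - z_k) and expand it in powers of x - z_j, i.e. through the shifted
  polynomial G_k(y) = Phi_k(y + z_j). In characteristic p, (x - z_j)^(rp+s) equals
  (x^p - z_j^p)^r (x - z_j)^s, so for s < p its coefficient of x^(lp-1) vanishes unless s = p - 1,
  and then it is binom(r, l-1) (-z_j)^(p(r+1-l)). Ampleness gives deg G_k < np - 1, hence
  I^[l]_k = sum_{r<n-1} T_lr J_rk, where J_rk is the coefficient of y^(rp+p-1) in G_k and T does
  not depend on k. In w-coordinates this reads c = T D with D_rk' = sum_{k<=k'} M_k J_rk, so
  det D divides det c. The entries J_0k of the row r = 0 are coefficients of y^(p-1) in a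
  polynomial with the factor y^(M_j-d) (y - (z_i - z_j))^(M_i-d'), where d + d' <= 1, so they are
  divisible by (z_i - z_j)^(M_i+M_j-p); expanding det D along that row finishes the proof. *)

lemma pcompose_monom: "monom c K \<circ>\<^sub>p q = smult c (q ^ K)"
  for q :: "'a::comm_semiring_1 poly"
  by (simp add: monom_altdef pcompose_smult pcompose_hom.hom_power pcompose_pCons)

lemma coeff_pcompose_eq_sum:
  fixes G q :: "'a::comm_semiring_1 poly"
  assumes "degree G < D"
  shows "coeff (G \<circ>\<^sub>p q) u = (\<Sum>K<D. coeff G K * coeff (q ^ K) u)"
proof -
  have "G = (\<Sum>K<D. monom (coeff G K) K)"
    using poly_as_sum_of_monoms'[of G "D - 1"] assms by (simp add: lessThan_Suc_atMost[symmetric])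
  then have "G \<circ>\<^sub>p q = (\<Sum>K<D. monom (coeff G K) K) \<circ>\<^sub>p q"
    by (rule arg_cong)
  also have "\<dots> = (\<Sum>K<D. smult (coeff G K) (q ^ K))"
    by (simp only: pcompose_sum pcompose_monom)
  finally show ?thesis
    by (simp add: coeff_sum)
qed

lemma coeff_pcompose_x_pow_mult:
  fixes H R :: "'a::comm_ring_1 poly"
  assumes "degree R < p" and "1 \<le> l"
  shows "coeff ((H \<circ>\<^sub>p monom 1 p) * R) (l * p - 1) = coeff H (l - 1) * coeff R (p - 1)"
proof -
  have summand: "coeff R i * coeff (H \<circ>\<^sub>p monom 1 p) (l * p - 1 - i) =
      (if i = p - 1 then coeff R (p - 1) * coeff H (l - 1) else 0)" if "i \<le> l * p - 1" for i
  proof (cases "i < p")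
    case True
    then have "l * p - 1 - i = p * (l - 1) + (p - 1 - i)"
      using assms(2) by (cases l) (auto simp: algebra_simps)
    then have "coeff (H \<circ>\<^sub>p monom 1 p) (l * p - 1 - i) =
        (if i = p - 1 then coeff H (l - 1) else 0)"
      using coeff_pcompose_monom[of "p - 1 - i" p H "l - 1"] True by auto
    then show ?thesis
      by simp
  next
    case False
    then show ?thesis
      using assms(1) by (auto simp: coeff_eq_0)
  qed
  have "p - 1 \<le> l * p - 1"
    using assms(2) by (simp add: diff_le_mono)
  have "coeff ((H \<circ>\<^sub>p monom 1 p) * R) (l * p - 1) =
      (\<Sum>i\<le>l * p - 1. coeff R i * coeff (H \<circ>\<^sub>p monom 1 p) (l * p - 1 - i))"
    by (simp only: mult.commute[of _ R] coeff_mult)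
  also have "\<dots> = (\<Sum>i\<le>l * p - 1. if i = p - 1 then coeff R (p - 1) * coeff H (l - 1) else 0)"
    by (intro sum.cong refl summand) simp
  finally show ?thesis
    using \<open>p - 1 \<le> l * p - 1\<close> by (simp add: mult.commute)
qed

lemma linear_power_CHAR_eq_pcompose:
  fixes a :: "'a::comm_ring_1"
  assumes "prime CHAR('a)" and "p = CHAR('a)"
  shows "[:a, 1:] ^ p = [:a ^ p, 1:] \<circ>\<^sub>p monom 1 p"
proof -
  have "[:a, 1:] ^ p = ([:a:] + monom 1 1) ^ p"
    by (simp add: monom_altdef)
  also have "\<dots> = [:a:] ^ p + monom 1 1 ^ p"
    using assms by (intro freshmans_dream) simp_all
  also have "\<dots> = [:a ^ p, 1:] \<circ>\<^sub>p monom 1 p"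
    by (simp add: pcompose_pCons monom_power flip: poly_const_pow)
  finally show ?thesis .
qed

lemma coeff_linear_power_CHAR:
  fixes a :: "'a::comm_ring_1"
  assumes "prime CHAR('a)" and "p = CHAR('a)" and "s < p" and "1 \<le> l"
  shows "coeff ([:a, 1:] ^ (r * p + s)) (l * p - 1) =
    (if s = p - 1 then of_nat (r choose (l - 1)) * (a ^ p) ^ (r + 1 - l) else 0)"
proof -
  have power_eq: "[:a, 1:] ^ (r * p + s) = ([:a ^ p, 1:] ^ r \<circ>\<^sub>p monom 1 p) * [:a, 1:] ^ s"
    using linear_power_CHAR_eq_pcompose[OF assms(1,2)]
    by (simp add: power_add power_mult mult.commute[of r] pcompose_hom.hom_power)
  have "coeff ([:a, 1:] ^ (r * p + s)) (l * p - 1) =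
      coeff ([:a ^ p, 1:] ^ r) (l - 1) * coeff ([:a, 1:] ^ s) (p - 1)"
    unfolding power_eq using assms(3,4)
    by (intro coeff_pcompose_x_pow_mult) (simp_all add: degree_linear_power)
  moreover have "coeff ([:a ^ p, 1:] ^ r) (l - 1) = of_nat (r choose (l - 1)) * (a ^ p) ^ (r + 1 - l)"
  proof (cases "l - 1 \<le> r")
    case True
    then show ?thesis
      using assms(4) by (simp add: coeff_linear_poly_power Suc_diff_le)
  next
    case False
    then show ?thesis
      by (simp add: coeff_eq_0 degree_linear_power binomial_eq_0)
  qed
  moreover have "coeff ([:a, 1:] ^ s) (p - 1) = (if s = p - 1 then 1 else 0)"
    using assms(3) by (auto simp: coeff_linear_power coeff_eq_0 degree_linear_power)
  ultimately show ?thesis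
    by simp
qed

lemma coeff_pcompose_linear_CHAR:
  fixes a :: "'a::comm_ring_1" and G :: "'a poly"
  assumes "prime CHAR('a)" and "p = CHAR('a)" and "1 \<le> l" and "degree G < N * p + (p - 1)"
  shows "coeff (G \<circ>\<^sub>p [:a, 1:]) (l * p - 1) =
    (\<Sum>r<N. of_nat (r choose (l - 1)) * (a ^ p) ^ (r + 1 - l) * coeff G (r * p + (p - 1)))"
proof -
  define T where "T r = of_nat (r choose (l - 1)) * (a ^ p) ^ (r + 1 - l)" for r
  have "0 < p"
    using assms(1,2) prime_gt_0_nat by blast
  have "coeff (G \<circ>\<^sub>p [:a, 1:]) (l * p - 1) =
      (\<Sum>K<Suc N * p. coeff G K * coeff ([:a, 1:] ^ K) (l * p - 1))"
    by (rule coeff_pcompose_eq_sum) (use assms(4) in simp)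
  also have "\<dots> = (\<Sum>r<Suc N. \<Sum>s<p.
      coeff G (r * p + s) * coeff ([:a, 1:] ^ (r * p + s)) (l * p - 1))"
    by (subst sum.nat_group[symmetric])
      (simp add: sum.atLeastLessThan_shift_0 atLeast0LessThan del: sum.lessThan_Suc)
  also have "\<dots> = (\<Sum>r<Suc N. \<Sum>s<p. if s = p - 1 then coeff G (r * p + (p - 1)) * T r else 0)"
    by (intro sum.cong refl, subst coeff_linear_power_CHAR[OF assms(1,2) _ assms(3)]) (auto simp: T_def)
  also have "\<dots> = (\<Sum>r<Suc N. coeff G (r * p + (p - 1)) * T r)"
    using \<open>0 < p\<close> by simp
  also have "\<dots> = (\<Sum>r<N. T r * coeff G (r * p + (p - 1)))"
    using assms(4) by (simp add: coeff_eq_0 mult.commute)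
  finally show ?thesis
    by (simp add: T_def)
qed

lemma coeff_monom_mult_linear_power_dvd:
  fixes t :: "'a::comm_ring_1"
  shows "t ^ (A + B - u) dvd coeff (monom 1 A * [:- t, 1:] ^ B) u"
proof (cases "A \<le> u \<and> u \<le> A + B")
  case True
  then have "u - A \<le> B" and "B - (u - A) = A + B - u"
    by linarith+
  have "coeff (monom 1 A * [:- t, 1:] ^ B) u = coeff ([:- t, 1:] ^ B) (u - A)"
    using True by (simp add: coeff_monom_mult)
  also have "\<dots> = of_nat (B choose (u - A)) * (- t) ^ (A + B - u)"
    using coeff_linear_poly_power[OF \<open>u - A \<le> B\<close>, of "- t" 1] \<open>B - (u - A) = A + B - u\<close>
    by simp
  finally show ?thesis
    by (simp only: power_minus[of t] mult.assoc[symmetric] dvd_triv_right)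
next
  case False
  then have "coeff (monom 1 A * [:- t, 1:] ^ B) u = 0"
    by (auto simp: coeff_monom_mult coeff_eq_0 degree_linear_power)
  then show ?thesis
    by simp
qed

lemma coeff_prod_linear_powers_dvd:
  fixes b :: "'i \<Rightarrow> 'a::comm_ring_1"
  assumes "finite S" and "i \<in> S" and "j \<in> S" and "i \<noteq> j" and "b j = 0"
    and "e + u \<le> E i + E j"
  shows "b i ^ e dvd coeff (\<Prod>m\<in>S. [:- b m, 1:] ^ E m) u"
proof -
  define X where "X = monom 1 (E j) * [:- b i, 1:] ^ E i"
  define H where "H = (\<Prod>m\<in>S - {j} - {i}. [:- b m, 1:] ^ E m)"
  have "(\<Prod>m\<in>S. [:- b m, 1:] ^ E m) =
      [:- b j, 1:] ^ E j * (\<Prod>m\<in>S - {j}. [:- b m, 1:] ^ E m)"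
    using assms(1,3) by (rule prod.remove)
  also have "(\<Prod>m\<in>S - {j}. [:- b m, 1:] ^ E m) = [:- b i, 1:] ^ E i * H"
    unfolding H_def using assms(1,2,4) by (intro prod.remove) auto
  also have "[:- b j, 1:] ^ E j = monom 1 (E j)"
    using assms(5) by (simp add: monom_altdef)
  finally have prod_eq: "(\<Prod>m\<in>S. [:- b m, 1:] ^ E m) = X * H"
    by (simp only: X_def mult.assoc)
  have summand_dvd: "b i ^ e dvd coeff X v * coeff H (u - v)" if "v \<le> u" for v
  proof -
    have "b i ^ e dvd b i ^ (E j + E i - v)"
      using assms(6) that by (intro le_imp_power_dvd) simp
    also have "\<dots> dvd coeff X v"
      unfolding X_def by (rule coeff_monom_mult_linear_power_dvd)
    finally show ?thesis
      by (rule dvd_mult2)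
  qed
  show ?thesis
    unfolding prod_eq coeff_mult by (intro dvd_sum summand_dvd) simp
qed

lemma dvd_det_if_factor_row_dvd:
  fixes c t d :: "nat \<Rightarrow> nat \<Rightarrow> 'a::comm_ring_1"
  assumes c: "\<And>l k. l < N \<Longrightarrow> k < N \<Longrightarrow> c l k = (\<Sum>r<N. t l r * d r k)"
    and "i < N" and row_dvd: "\<And>k. k < N \<Longrightarrow> x dvd d i k"
  shows "x dvd det (mat N N (\<lambda>(l, k). c l k))"
proof -
  define T where "T = mat N N (\<lambda>(l, r). t l r)"
  define D where "D = mat N N (\<lambda>(r, k). d r k)"
  have T: "T \<in> carrier_mat N N" and D: "D \<in> carrier_mat N N"
    by (simp_all add: T_def D_def)
  have "mat N N (\<lambda>(l, k). c l k) = T * D"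
    by (rule eq_matI) (simp_all add: T_def D_def c scalar_prod_def atLeast0LessThan)
  moreover have "det D = (\<Sum>k<N. D $$ (i, k) * cofactor D i k)"
    using D \<open>i < N\<close> by (rule laplace_expansion_row)
  then have "x dvd det D"
    unfolding \<open>det D = _\<close> by (intro dvd_sum dvd_mult2) (simp add: D_def \<open>i < N\<close> row_dvd)
  ultimately show ?thesis
    using det_mult[OF T D] by simp
qed

lemma Mexp_pos_cong:
  assumes "prime p" and "coprime q p" and "\<not> p dvd mi"
  shows "0 < Mexp p q mi \<and> [Mexp p q mi * q + mi = 0] (mod p)"
proof -
  obtain x where x: "[q * x = 1] (mod p)"
    using cong_solve_coprime_nat[OF assms(2)] by auto
  have "0 < x"
    using x assms(1) by (cases x) (auto simp: cong_def prime_gt_1_nat)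
  have "0 < mi"
    using assms(3) by (auto intro: gr0I)
  have "1 \<le> p"
    using prime_gt_1_nat[OF assms(1)] by simp
  have "[x * (p - 1) * mi * q + mi = 1 * ((p - 1) * mi) + mi] (mod p)"
    using cong_mult[OF x cong_refl[of "(p - 1) * mi"]] by (intro cong_add) (simp_all add: mult_ac)
  also have "1 * ((p - 1) * mi) + mi = p * mi"
    using \<open>1 \<le> p\<close> by (simp add: algebra_simps)
  also have "[p * mi = 0] (mod p)"
    by (simp add: cong_0_iff)
  finally have "[x * (p - 1) * mi * q + mi = 0] (mod p)" .
  moreover have "0 < x * (p - 1) * mi"
    using \<open>0 < x\<close> \<open>0 < mi\<close> assms(1) prime_gt_1_nat by simp
  ultimately have "\<exists>M. 0 < M \<and> [M * q + mi = 0] (mod p)"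
    by blast
  then show ?thesis
    unfolding Mexp_def by (rule LeastI_ex)
qed

lemma Mexp_not_dvd:
  assumes "prime p" and "coprime q p" and "\<not> p dvd mi"
  shows "\<not> p dvd Mexp p q mi"
proof
  assume "p dvd Mexp p q mi"
  moreover have "p dvd Mexp p q mi * q + mi"
    using Mexp_pos_cong[OF assms] by (simp add: cong_0_iff)
  ultimately show False
    using assms(3) by (simp add: dvd_add_right_iff)
qed

lemma CHAR_mpoly [simp]: "CHAR('a::comm_semiring_1 mpoly) = CHAR('a)"
proof (rule CHAR_eqI)
  show "of_nat CHAR('a) = (0 :: 'a mpoly)"
    by (simp flip: single_of_nat)
next
  fix x assume "of_nat x = (0 :: 'a mpoly)"
  then have "of_nat x = (0 :: 'a)"
    by (metis lookup_single_eq lookup_zero single_of_nat)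
  then show "CHAR('a) dvd x"
    by (simp add: of_nat_eq_0_iff_char_dvd)
qed

lemma mconst_mult: "mconst a * mconst b = mconst (a * b)"
  by (simp add: mconst_def mult_single)

lemma mconst_uminus: "mconst (- a) = - mconst a"
  by (simp add: mconst_def single_uminus)

lemma mconst_0 [simp]: "mconst 0 = 0"
  by (simp add: mconst_def)

lemma mconst_1 [simp]: "mconst 1 = 1"
  by (simp add: mconst_def)

lemma coords_in_wvec_basis:
  fixes c v :: "nat \<Rightarrow> 'a::field mpoly" and M :: "nat \<Rightarrow> nat"
  assumes nz: "\<And>k. k \<in> {1..N} \<Longrightarrow> of_nat (M k) \<noteq> (0 :: 'a)"
    and v: "\<And>k. k \<in> {1..N} \<Longrightarrow> v k = (\<Sum>j\<in>{1..N}. c j * mconst (wvec M j k))"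
    and "k' \<in> {1..N}"
  shows "c k' = (\<Sum>k\<in>{1..k'}. mconst (of_nat (M k)) * v k)"
proof -
  have coord_diff: "mconst (of_nat (M k)) * v k = c k - (if k = 1 then 0 else c (k - 1))"
    if k: "k \<in> {1..N}" for k
  proof -
    \<comment> \<open>Only w_k and w_(k-1) have a nonzero k-th entry, namely 1/M_k and -1/M_k.\<close>
    define w where "w = mconst (inverse (of_nat (M k)) :: 'a)"
    have "v k = (\<Sum>j\<in>{1..N}. (if j = k then c j * w else 0) - (if j = k - 1 then c j * w else 0))"
      unfolding v[OF k] by (intro sum.cong refl) (auto simp: wvec_def w_def mconst_uminus)
    also have "\<dots> = c k * w - (if k = 1 then 0 else c (k - 1) * w)"
      using k by (auto simp: sum_subtractf)
    also have "\<dots> = (c k - (if k = 1 then 0 else c (k - 1))) * w"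
      by (simp add: left_diff_distrib)
    finally show ?thesis
      using nz[OF k] by (simp add: w_def mult.left_commute mconst_mult)
  qed
  from \<open>k' \<in> {1..N}\<close> have "1 \<le> k'" and "k' \<le> N"
    by simp_all
  then show ?thesis
  proof (induction k' rule: dec_induct)
    case base
    then show ?case
      using coord_diff[of 1] by simp
  next
    case (step n)
    then show ?case
      using coord_diff[of "Suc n"] by simp
  qed
qed

(* Phi_p(x + a, z) / (x + a - z_k), as a polynomial in x. *)
definition Phi_quot ::
    "nat \<Rightarrow> (nat \<Rightarrow> nat) \<Rightarrow> nat \<Rightarrow> 'a::comm_ring_1 mpoly \<Rightarrow> 'a mpoly poly" where
  "Phi_quot n M k a = (\<Prod>i\<in>{1..n}. [:- (mvar i - a), 1:] ^ (M i - (if i = k then 1 else 0)))"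

lemma Phi_quot_0_eq_pcompose: "Phi_quot n M k 0 = Phi_quot n M k a \<circ>\<^sub>p [:- a, 1:]"
  by (simp add: Phi_quot_def pcompose_prod pcompose_hom.hom_power pcompose_pCons)

lemma degree_Phi_quot_less:
  assumes "k \<in> {1..n}" and "0 < M k" and "(\<Sum>i\<in>{1..n}. M i) < n * p"
  shows "degree (Phi_quot n M k a) < (n - 1) * p + (p - 1)"
proof -
  have "degree (Phi_quot n M k a) \<le> (\<Sum>i\<in>{1..n}. M i - (if i = k then 1 else 0))"
    unfolding Phi_quot_def by (rule order_trans[OF degree_prod_sum_le]) (simp_all add: degree_linear_power)
  moreover have "(\<Sum>i\<in>{1..n}. M i) =
      (\<Sum>i\<in>{1..n}. (M i - (if i = k then 1 else 0)) + (if i = k then 1 else 0))"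
    using assms(2) by (intro sum.cong) auto
  then have "(\<Sum>i\<in>{1..n}. M i) = (\<Sum>i\<in>{1..n}. M i - (if i = k then 1 else 0)) + 1"
    using assms(1) by (simp add: sum.distrib)
  ultimately show ?thesis
    using assms(3) by (cases n) (auto simp: algebra_simps)
qed

lemma Ivec_eq_sum_coeff_Phi_quot:
  fixes a :: "'a::comm_ring_1 mpoly"
  assumes "prime CHAR('a)" and "p = CHAR('a)" and "1 \<le> l"
    and "k \<in> {1..n}" and "0 < M k" and "(\<Sum>i\<in>{1..n}. M i) < n * p"
  shows "Ivec n M p l k =
    (\<Sum>r<n - 1. of_nat (r choose (l - 1)) * ((- a) ^ p) ^ (r + 1 - l) *
      coeff (Phi_quot n M k a) (r * p + (p - 1)))"
proof -
  have "Ivec n M p l k = coeff (Phi_quot n M k 0) (l * p - 1)"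
    by (simp add: Ivec_def Phi_quot_def)
  also have "\<dots> = coeff (Phi_quot n M k a \<circ>\<^sub>p [:- a, 1:]) (l * p - 1)"
    by (simp only: Phi_quot_0_eq_pcompose[of n M k a])
  also have "\<dots> = (\<Sum>r<n - 1. of_nat (r choose (l - 1)) * ((- a) ^ p) ^ (r + 1 - l) *
      coeff (Phi_quot n M k a) (r * p + (p - 1)))"
    using assms by (intro coeff_pcompose_linear_CHAR degree_Phi_quot_less) simp_all
  finally show ?thesis .
qed

lemma Phi_quot_coeff_dvd:
  assumes "i \<in> {1..n}" and "j \<in> {1..n}" and "i \<noteq> j"
  shows "(mvar i - mvar j) ^ (M i + M j - Suc u) dvd
    coeff (Phi_quot n M k (mvar j) :: 'a::comm_ring_1 mpoly poly) u"
proof (cases "Suc u \<le> M i + M j")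
  case True
  then show ?thesis
    unfolding Phi_quot_def using assms
    by (intro coeff_prod_linear_powers_dvd[where b = "\<lambda>m. mvar m - mvar j"]) auto
qed simp

theorem lemma7p6:
  fixes n q :: nat and m :: "nat \<Rightarrow> nat"
    and c :: "nat \<Rightarrow> nat \<Rightarrow> ('p::prime_card) mod_ring mpoly"
  defines "p \<equiv> CARD('p)"
  defines "M \<equiv> (\<lambda>i. Mexp p q (m i))"
  assumes "prime q" and "2 \<le> n" and "n < p" and "q < p"
    and "\<And>i. i \<in> {1..n} \<Longrightarrow> 0 < m i \<and> m i < q"
    and ample: "(\<Sum>i\<in>{1..n}. M i) div p = n - 1"
    and c_def: "\<And>l k. l \<in> {1..n-1} \<Longrightarrow> k \<in> {1..n} \<Longrightarrow>
        (Ivec n M p l k :: 'p mod_ring mpoly) =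
        (\<Sum>j\<in>{1..n-1}. c l j * mconst (wvec M j k))"
    and "i \<in> {1..n}" and "j \<in> {1..n}" and "i \<noteq> j"
  shows "(mvar i - mvar j) ^ (M i + M j - p) dvd
           det (mat (n - 1) (n - 1) (\<lambda>(l, j). c (l + 1) (j + 1)))"
proof -
  have p: "prime p" "p = CHAR('p mod_ring)"
    by (simp_all add: p_def prime_card)
  have M: "0 < M k" "of_nat (M k) \<noteq> (0 :: 'p mod_ring)" if "k \<in> {1..n}" for k
  proof -
    have "coprime q p" and "\<not> p dvd m k"
      using primes_coprime[OF \<open>prime q\<close> p(1)] \<open>q < p\<close> assms(7)[OF that]
      by (auto dest: dvd_imp_le)
    then show "0 < M k" "of_nat (M k) \<noteq> (0 :: 'p mod_ring)"
      using Mexp_pos_cong[OF p(1)] Mexp_not_dvd[OF p(1)]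
      by (simp_all add: M_def of_nat_eq_0_iff_char_dvd p_def)
  qed
  have "(\<Sum>i\<in>{1..n}. M i) < n * p"
    using ample \<open>2 \<le> n\<close> prime_gt_0_nat[OF p(1)] by (simp flip: div_less_iff_less_mult)
  define T :: "nat \<Rightarrow> nat \<Rightarrow> 'p mod_ring mpoly"
    where "T l r = of_nat (r choose (l - 1)) * ((- mvar j) ^ p) ^ (r + 1 - l)" for l r
  define J :: "nat \<Rightarrow> nat \<Rightarrow> 'p mod_ring mpoly"
    where "J r k = coeff (Phi_quot n M k (mvar j)) (r * p + (p - 1))" for r k
  define D where "D r k' = (\<Sum>k\<in>{1..k'}. mconst (of_nat (M k)) * J r k)" for r k'
  have Ivec: "Ivec n M p l k = (\<Sum>r<n - 1. T l r * J r k)" if "1 \<le> l" and "k \<in> {1..n}" for l k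
    unfolding T_def J_def using that M(1)[OF that(2)] \<open>(\<Sum>i\<in>{1..n}. M i) < n * p\<close>
    by (rule Ivec_eq_sum_coeff_Phi_quot[OF p(1)[unfolded p(2)] p(2)])
  have "c l k' = (\<Sum>r<n - 1. T l r * D r k')" if "l \<in> {1..n - 1}" and "k' \<in> {1..n - 1}" for l k'
  proof -
    have "c l k' = (\<Sum>k\<in>{1..k'}. mconst (of_nat (M k)) * Ivec n M p l k)"
      using that M c_def by (intro coords_in_wvec_basis[where N = "n - 1"]) auto
    also have "\<dots> = (\<Sum>k\<in>{1..k'}. \<Sum>r<n - 1. T l r * (mconst (of_nat (M k)) * J r k))"
      using that by (intro sum.cong refl) (subst Ivec, auto simp: sum_distrib_left mult_ac)
    also have "\<dots> = (\<Sum>r<n - 1. T l r * D r k')"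
      by (subst sum.swap) (simp add: D_def sum_distrib_left)
    finally show ?thesis .
  qed
  moreover have "(mvar i - mvar j) ^ (M i + M j - p) dvd D 0 k" for k
    using Phi_quot_coeff_dvd[OF \<open>i \<in> {1..n}\<close> \<open>j \<in> {1..n}\<close> \<open>i \<noteq> j\<close>, of M "p - 1"]
      prime_gt_0_nat[OF p(1)]
    by (auto simp: D_def J_def intro!: dvd_sum dvd_mult)
  ultimately show ?thesis
    using \<open>2 \<le> n\<close>
    by (intro dvd_det_if_factor_row_dvd[where t = "\<lambda>l r. T (l + 1) r" and d = "\<lambda>r k. D r (k + 1)"
          and i = 0]) auto
qed

end
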